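(* Let $C>0$ and let $\Psi_{\mathrm{ENO}}:\mathbb{R}\to\mathbb{R}$ be $\Psi_{\mathrm{ENO}}(r)=1$ if $|r|\ge 1$ and $\Psi_{\mathrm{ENO}}(r)=r$ if $|r|\le 1$. Fix indices $i,n$ and real numbers $Q_i^{n-2},Q_i^{n-1},Q_i^n,Q_i^{n+1},Q_{i-1}^n$ satisfying $$Q_i^n + \tfrac12\Psi_{\mathrm{ENO}}(r_i^n)\,(Q_i^{n+1}-Q_i^n) + C\,Q_i^n = Q_i^{n-1} + \tfrac12\Psi_{\mathrm{ENO}}(r_i^{n-1})\,(Q_i^{n}-Q_i^{n-1}) + C\,Q_{i-1}^n,$$ where $r_i^n = \frac{Q_i^n-Q_i^{n-1}}{Q_i^{n+1}-Q_i^n}$ and $r_i^{n-1}=\frac{Q_i^{n-1}-Q_i^{n-2}}{Q_i^{n}-Q_i^{n-1}}$, with the convention that a product $\Psi_{\mathrm{ENO}}(r)\cdot(\text{denominator of } r)$ is $0$ whenever that denominator vanishes. Then $$\min\{Q_i^{n-1},Q_{i-1}^n\}\le Q_i^n\le \max\{Q_i^{n-1},Q_{i-1}^n\}.$$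
   Context: This is the (fully implicit, four time levels) scheme for $\kappa\partial_tq+v\partial_xq=0$ obtained from the time approximation $\tau\partial_tq_i^n\approx Q_i^n-Q_i^{n-1}+\frac{1-w}{2}(Q_i^{n+1}-2Q_i^n+Q_i^{n-1})+\frac{w}{2}(Q_i^n-2Q_i^{n-1}+Q_i^{n-2})$ with a solution-dependent ENO weight $w\in\{0,1\}$ ($w=0$ if $|r_i^n|\ge1$, $w=1$ if $|r_i^n|\le1$), written via $\psi=1-w+wr$; $C=C_i^n=v^n\tau/(\kappa h_i)$ is the local Courant number. *)

theory Defs
  imports Complex_Main
begin

text \<open>ENO limiter: value 1 if |r| >= 1, value r if |r| <= 1.
  At r = -1 the two clauses disagree; we take the first clause (value 1).\<close>
definition psi_ENO :: "real \<Rightarrow> real" where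
  "psi_ENO r = (if \<bar>r\<bar> \<ge> 1 then 1 else r)"

definition psi_prod :: "real \<Rightarrow> real \<Rightarrow> real" where
  "psi_prod num den = (if den = 0 then 0 else psi_ENO (num / den) * den)"

end

theory Submission
  imports Defs
begin

text \<open>Write d for the increment Qn - Qnm1. Both limited terms of the scheme are bounded in
  absolute value by |d|: the one at time n has d as numerator of its ratio, and |psi_ENO r| \<le> |r|;
  the one at time n-1 has d as denominator, and |psi_ENO r| \<le> 1. So the rearranged scheme
  d + P/2 - S/2 = C (Qim1 - Qn) has a left-hand side of the sign of d, whence Qn - Qnm1 and
  Qim1 - Qn never have strictly opposite signs.\<close>

lemma abs_psi_ENO_le_abs: "\<bar>psi_ENO r\<bar> \<le> \<bar>r\<bar>"
  by (simp add: psi_ENO_def)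

lemma abs_psi_ENO_le_1: "\<bar>psi_ENO r\<bar> \<le> 1"
  by (simp add: psi_ENO_def)

lemma abs_psi_prod_le_num: "\<bar>psi_prod a b\<bar> \<le> \<bar>a\<bar>"
proof (cases "b = 0")
  case False
  have "\<bar>psi_ENO (a / b) * b\<bar> \<le> \<bar>a / b\<bar> * \<bar>b\<bar>"
    unfolding abs_mult by (intro mult_right_mono abs_psi_ENO_le_abs) simp
  also have "\<dots> = \<bar>a\<bar>" using False by (simp add: abs_divide)
  finally show ?thesis using False by (simp add: psi_prod_def)
qed (simp add: psi_prod_def)

lemma abs_psi_prod_le_den: "\<bar>psi_prod a b\<bar> \<le> \<bar>b\<bar>"
proof -
  have "\<bar>psi_ENO (a / b) * b\<bar> \<le> 1 * \<bar>b\<bar>"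
    unfolding abs_mult by (intro mult_right_mono abs_psi_ENO_le_1) simp
  then show ?thesis by (simp add: psi_prod_def)
qed

theorem mainTheorem2:
  fixes C Qnm2 Qnm1 Qn Qnp1 Qim1 :: real
  assumes "C > 0"
    and "Qn + (1/2) * psi_prod (Qn - Qnm1) (Qnp1 - Qn) + C * Qn
         = Qnm1 + (1/2) * psi_prod (Qnm1 - Qnm2) (Qn - Qnm1) + C * Qim1"
  shows "min Qnm1 Qim1 \<le> Qn \<and> Qn \<le> max Qnm1 Qim1"
proof -
  define d where "d = Qn - Qnm1"
  define P where "P = psi_prod d (Qnp1 - Qn)"
  define S where "S = psi_prod (Qnm1 - Qnm2) d"
  have P: "\<bar>P\<bar> \<le> \<bar>d\<bar>" and S: "\<bar>S\<bar> \<le> \<bar>d\<bar>"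
    unfolding P_def S_def by (rule abs_psi_prod_le_num abs_psi_prod_le_den)+
  have scheme: "d + P / 2 - S / 2 = C * (Qim1 - Qn)"
    using assms(2) unfolding P_def S_def d_def by (simp add: right_diff_distrib)
  have "0 \<le> C * (Qim1 - Qn)" if "0 \<le> d"
    using P S that unfolding scheme[symmetric] by linarith
  then have up: "Qn \<le> Qim1" if "0 \<le> d"
    using that \<open>C > 0\<close> by (simp add: zero_le_mult_iff)
  have "C * (Qim1 - Qn) \<le> 0" if "d \<le> 0"
    using P S that unfolding scheme[symmetric] by linarith
  then have down: "Qim1 \<le> Qn" if "d \<le> 0"
    using that \<open>C > 0\<close> by (simp add: mult_le_0_iff)
  show ?thesis using up down unfolding d_def by linarith
qed

end
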